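(* Consider a single-server FIFO system in a packet-switched network consisting of a work-conserving link of constant bit rate $c>0$ (bits per unit time), with infinite buffer and initially empty, fed by an input flow of packets of positive length. Let $A(t)$ and $A^{*}(t)$ be the cumulative input and output traffic (in bits) up to time $t$ (excluded), counted at the packet level as described in the context. Then $\beta(t)=ct$ is neither a strict service curve nor a service curve of this system; that is, there exist input flows for which the strict service curve inequality fails for $\beta(t)=ct$, and there exist input flows and times $t\ge 0$ with $A^{*}(t) < \inf_{0\le s\le t}\{A(s)+c(t-s)\}$.
   Context: Packets are indexed $n=1,2,\dots$, with arrival time $a(n)$, departure time $d(n)$ and length $l(n)>0$ bits. By convention, a packet is said to have arrived (respectively, been served) when and only when its last bit has arrived (respectively, departed). $A(t)$ denotes the cumulative amount of traffic (sum of lengths of packets) that has arrived in $[0,t)$, and $A^{*}(t)$ the cumulative amount of traffic that has been served (departed) in $[0,t)$; $A(0)=A^{*}(0)=0$, $A(s,t)=A(t)-A(s)$, $A^{*}(s,t)=A^{*}(t)-A^{*}(s)$. Let $\mathcal{F}_0$ be the set of nonnegative nondecreasing functions $f$ with $f(0)=0$. A function $\beta\in\mathcal{F}_0$ is a service curve of the system if for all $t\ge0$, $A^{*}(t)\ge \inf_{0\le s\le t}\{A(s)+\beta(t-s)\}$. A function $\beta\in\mathcal{F}_0$ is a strict service curve if during any backlogged period $(s,t]$ (a period during which there is always traffic that has arrived but not yet been served), $A^{*}(s,t)\ge\beta(t-s)$. The link is work-conserving: whenever the system is backlogged it transmits bits at rate $c$. *)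

theory Defs
  imports Complex_Main
begin

text \<open>Packets are indexed n = 1,2,...; a n is the arrival time (of the last bit),
  l n the length in bits.\<close>

definition valid_flow :: "(nat \<Rightarrow> real) \<Rightarrow> (nat \<Rightarrow> real) \<Rightarrow> bool" where
  "valid_flow a l \<longleftrightarrow>
     (\<forall>n\<ge>1. 0 \<le> a n \<and> 0 < l n) \<and>
     (\<forall>n\<ge>1. a n \<le> a (Suc n)) \<and>
     (\<forall>t. finite {n. n \<ge> 1 \<and> a n < t})"

fun dep :: "real \<Rightarrow> (nat \<Rightarrow> real) \<Rightarrow> (nat \<Rightarrow> real) \<Rightarrow> nat \<Rightarrow> real" where
  "dep c a l 0 = 0"
| "dep c a l (Suc n) = max (a (Suc n)) (dep c a l n) + l (Suc n) / c"

definition cumA :: "(nat \<Rightarrow> real) \<Rightarrow> (nat \<Rightarrow> real) \<Rightarrow> real \<Rightarrow> real" where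
  "cumA a l t = (\<Sum>n\<in>{n. n \<ge> 1 \<and> a n < t}. l n)"

definition cumD :: "real \<Rightarrow> (nat \<Rightarrow> real) \<Rightarrow> (nat \<Rightarrow> real) \<Rightarrow> real \<Rightarrow> real" where
  "cumD c a l t = (\<Sum>n\<in>{n. n \<ge> 1 \<and> dep c a l n < t}. l n)"

definition service_curve ::
  "real \<Rightarrow> (nat \<Rightarrow> real) \<Rightarrow> (nat \<Rightarrow> real) \<Rightarrow> (real \<Rightarrow> real) \<Rightarrow> bool" where
  "service_curve c a l \<beta> \<longleftrightarrow>
     (\<forall>t\<ge>0. cumD c a l t \<ge> Inf ((\<lambda>s. cumA a l s + \<beta> (t - s)) ` {0..t}))"

text \<open>(s,t] is a backlogged period if at every time u in (s,t] some arrived traffic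
  has not yet been served, i.e. A(u) > A*(u).\<close>

definition strict_service_curve ::
  "real \<Rightarrow> (nat \<Rightarrow> real) \<Rightarrow> (nat \<Rightarrow> real) \<Rightarrow> (real \<Rightarrow> real) \<Rightarrow> bool" where
  "strict_service_curve c a l \<beta> \<longleftrightarrow>
     (\<forall>s t. 0 \<le> s \<and> s < t \<and> (\<forall>u\<in>{s<..t}. cumA a l u > cumD c a l u) \<longrightarrow>
        cumD c a l t - cumD c a l s \<ge> \<beta> (t - s))"

end

theory Submission
  imports Defs
begin

text \<open>Let packet n arrive at time n with length c, so that each packet takes exactly one
  time unit to transmit. During (1,2] packet 1 is being transmitted, so the system is
  backlogged, but since a packet counts as served only once its last bit has left,
  A* = 0 there while A = c. So A* gains nothing on the backlogged period (1,2], and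
  A*(t) = 0 < c (t - 1) \<le> A(s) + c (t - s) for all s \<in> [0,t] when 1 < t \<le> 2.\<close>

lemma dep_ge_arrival_plus_transmission:
  assumes "n \<ge> 1"
  shows "a n + l n / c \<le> dep c a l n"
proof -
  obtain m where "n = Suc m" using assms by (cases n) auto
  then show ?thesis by simp
qed

lemma cumA_eq_0:
  assumes "\<forall>n\<ge>1. t \<le> a n"
  shows "cumA a l t = 0"
proof -
  have "{n. n \<ge> 1 \<and> a n < t} = {}" using assms by force
  then show ?thesis unfolding cumA_def by (metis sum.empty)
qed

lemma cumD_eq_0:
  assumes "\<forall>n\<ge>1. t \<le> dep c a l n"
  shows "cumD c a l t = 0"
proof -
  have "{n. n \<ge> 1 \<and> dep c a l n < t} = {}" using assms by force
  then show ?thesis unfolding cumD_def by (metis sum.empty)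
qed

lemma valid_flow_periodic:
  assumes "c > 0"
  shows "valid_flow real (\<lambda>_. c)"
proof -
  have "finite {n. n \<ge> 1 \<and> real n < t}" for t
    by (rule finite_subset[of _ "{..nat \<lceil>t\<rceil>}"]) (auto, linarith)
  then show ?thesis using assms unfolding valid_flow_def by auto
qed

lemma cumA_periodic_le_1: "u \<le> 1 \<Longrightarrow> cumA real (\<lambda>_. c) u = 0"
  by (rule cumA_eq_0) auto

lemma cumA_periodic_first_slot:
  assumes "1 < u" "u \<le> 2"
  shows "cumA real (\<lambda>_. c) u = c"
proof -
  have "{n. n \<ge> 1 \<and> real n < u} = {1}"
  proof safe
    fix n :: nat assume "n \<ge> 1" "real n < u"
    then show "n = 1" using assms by linarith
  qed (use assms in auto)
  then show ?thesis unfolding cumA_def by simp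
qed

lemma cumD_periodic_le_2:
  assumes "c > 0" "u \<le> 2"
  shows "cumD c real (\<lambda>_. c) u = 0"
proof (rule cumD_eq_0, intro allI impI)
  fix n :: nat assume "n \<ge> 1"
  then have "real n + c / c \<le> dep c real (\<lambda>_. c) n"
    using dep_ge_arrival_plus_transmission[of n real "\<lambda>_. c" c] by simp
  then show "u \<le> dep c real (\<lambda>_. c) n" using assms \<open>n \<ge> 1\<close> by auto
qed

lemma periodic_not_strict_service_curve:
  assumes "c > 0"
  shows "\<not> strict_service_curve c real (\<lambda>_. c) (\<lambda>t. c * t)"
proof
  assume strict: "strict_service_curve c real (\<lambda>_. c) (\<lambda>t. c * t)"
  have "\<forall>u\<in>{1<..2}. cumA real (\<lambda>_. c) u > cumD c real (\<lambda>_. c) u"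
    using cumD_periodic_le_2 cumA_periodic_first_slot assms by auto
  then have "c * (2 - 1) \<le> cumD c real (\<lambda>_. c) 2 - cumD c real (\<lambda>_. c) 1"
    using strict[unfolded strict_service_curve_def, rule_format, of 1 2] by simp
  then show False using cumD_periodic_le_2 assms by simp
qed

lemma periodic_Inf_ge:
  assumes "c > 0" "1 < t" "t \<le> 2"
  shows "c * (t - 1) \<le> Inf ((\<lambda>s. cumA real (\<lambda>_. c) s + c * (t - s)) ` {0..t})"
proof (rule cInf_greatest)
  fix x assume "x \<in> (\<lambda>s. cumA real (\<lambda>_. c) s + c * (t - s)) ` {0..t}"
  then obtain s where s: "s \<in> {0..t}" "x = cumA real (\<lambda>_. c) s + c * (t - s)" by auto
  show "c * (t - 1) \<le> x"
  proof (cases "s \<le> 1")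
    case True
    then have "c * (t - 1) \<le> c * (t - s)" using assms by (intro mult_left_mono) auto
    then show ?thesis using s cumA_periodic_le_1[OF True] by simp
  next
    case False
    have "c * (t - 1) \<le> c" using assms by (simp add: mult_left_le)
    moreover have "0 \<le> c * (t - s)" using assms s by auto
    moreover have "x = c + c * (t - s)" using s cumA_periodic_first_slot[of s c] False assms by simp
    ultimately show ?thesis by linarith
  qed
qed (use assms in simp)

theorem proposition2:
  fixes c :: real
  assumes "c > 0"
  shows "(\<exists>a l. valid_flow a l \<and> \<not> strict_service_curve c a l (\<lambda>t. c * t))
       \<and> (\<exists>a l t. valid_flow a l \<and> t \<ge> 0 \<and>
            cumD c a l t < Inf ((\<lambda>s. cumA a l s + c * (t - s)) ` {0..t}))"
proof
  show "\<exists>a l. valid_flow a l \<and> \<not> strict_service_curve c a l (\<lambda>t. c * t)"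
    using valid_flow_periodic periodic_not_strict_service_curve assms by blast
  have "cumD c real (\<lambda>_. c) 2 < Inf ((\<lambda>s. cumA real (\<lambda>_. c) s + c * (2 - s)) ` {0..2})"
    using cumD_periodic_le_2[OF assms] periodic_Inf_ge[OF assms, of 2] assms by simp
  then show "\<exists>a l t. valid_flow a l \<and> t \<ge> 0 \<and>
      cumD c a l t < Inf ((\<lambda>s. cumA a l s + c * (t - s)) ` {0..t})"
    using valid_flow_periodic[OF assms] by (intro exI[of _ real] exI[of _ "\<lambda>_. c"] exI[of _ 2]) simp
qed

end
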